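(* Let $\Gamma=(N,A,u)$ be a finite normal form game. If $\operatorname{Aut}(\Gamma)$ has a subgroup $G$ isomorphic to $S_N$ with $G_N=\{\mathrm{id}_\Gamma\}$, then $\Gamma$ is $n$-transitively standard symmetric; that is, $\operatorname{Aut}(\Gamma)$ is player $n$-transitive and $\operatorname{Aut}(\Gamma)$ has a subgroup that is player transitive and strategy trivial.
   Context: A game bijection $g=(\pi;(\tau_i)_{i\in N})$ of $\Gamma$ consists of $\pi\in S_N$ (its player permutation) and bijections $\tau_i:A_i\to A_{\pi(i)}$; write $g(i)=\pi(i)$, $g(s_i)=\tau_i(s_i)$, $g(s)=(\tau_{\pi^{-1}(j)}(s_{\pi^{-1}(j)}))_{j\in N}$; composition is $(\eta;(\phi_j))\circ(\pi;(\tau_i))=(\eta\circ\pi;(\phi_{\pi(i)}\circ\tau_i)_{i\in N})$, identity $\mathrm{id}_\Gamma=(\mathrm{id}_N;(\mathrm{id}_{A_i}))$. $g$ is an automorphism if $u_i(s)=u_{g(i)}(g(s))$ for all $i\in N$, $s\in A$; $\operatorname{Aut}(\Gamma)$ is the group of automorphisms. For a subgroup $G$, $G_N=\{g\in G: g(i)=i\ \forall i\in N\}$. A subgroup is player transitive if its player permutations act transitively on $N$, player $n$-transitive if its set of player permutations is all of $S_N$, and strategy trivial if for each $i\in N$, $g(s_i)=s_i$ for all $g$ in it with $g(i)=i$ and all $s_i\in A_i$. *)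

theory Defs
  imports Complex_Main "HOL-Algebra.Bij" "HOL-Combinatorics.Permutations"
begin

definition finite_game :: "'p set \<Rightarrow> ('p \<Rightarrow> 's set) \<Rightarrow> ('p \<Rightarrow> ('p \<Rightarrow> 's) \<Rightarrow> real) \<Rightarrow> bool" where
  "finite_game N A u \<longleftrightarrow> finite N \<and> N \<noteq> {} \<and> (\<forall>i\<in>N. finite (A i) \<and> A i \<noteq> {})"

type_synonym ('p, 's) gbij = "('p \<Rightarrow> 'p) \<times> ('p \<Rightarrow> 's \<Rightarrow> 's)"

text \<open>Game bijections, represented canonically: the player permutation permutes N
 (identity outside N), and the strategy maps are extensional.\<close>

definition game_bijections :: "'p set \<Rightarrow> ('p \<Rightarrow> 's set) \<Rightarrow> ('p, 's) gbij set" where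
  "game_bijections N A = {(\<pi>, \<tau>). \<pi> permutes N \<and> \<tau> \<in> extensional N \<and>
      (\<forall>i\<in>N. \<tau> i \<in> extensional (A i) \<and> bij_betw (\<tau> i) (A i) (A (\<pi> i)))}"

definition gb_comp :: "'p set \<Rightarrow> ('p \<Rightarrow> 's set) \<Rightarrow> ('p, 's) gbij \<Rightarrow> ('p, 's) gbij \<Rightarrow> ('p, 's) gbij" where
  "gb_comp N A h g = (fst h \<circ> fst g,
      \<lambda>i\<in>N. \<lambda>x\<in>A i. snd h (fst g i) (snd g i x))"

definition gb_id :: "'p set \<Rightarrow> ('p \<Rightarrow> 's set) \<Rightarrow> ('p, 's) gbij" where
  "gb_id N A = (id, \<lambda>i\<in>N. \<lambda>x\<in>A i. x)"

definition gb_profile :: "'p set \<Rightarrow> ('p, 's) gbij \<Rightarrow> ('p \<Rightarrow> 's) \<Rightarrow> ('p \<Rightarrow> 's)" where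
  "gb_profile N g s = (\<lambda>j\<in>N. snd g (inv_into N (fst g) j) (s (inv_into N (fst g) j)))"

definition game_automorphisms ::
  "'p set \<Rightarrow> ('p \<Rightarrow> 's set) \<Rightarrow> ('p \<Rightarrow> ('p \<Rightarrow> 's) \<Rightarrow> real) \<Rightarrow> ('p, 's) gbij set" where
  "game_automorphisms N A u = {g \<in> game_bijections N A.
      \<forall>i\<in>N. \<forall>s\<in>PiE N A. u i s = u (fst g i) (gb_profile N g s)}"

definition Aut_group ::
  "'p set \<Rightarrow> ('p \<Rightarrow> 's set) \<Rightarrow> ('p \<Rightarrow> ('p \<Rightarrow> 's) \<Rightarrow> real) \<Rightarrow> ('p, 's) gbij monoid" where
  "Aut_group N A u = \<lparr>carrier = game_automorphisms N A u, monoid.mult = gb_comp N A, one = gb_id N A\<rparr>"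

definition player_stabilizer :: "'p set \<Rightarrow> ('p, 's) gbij set \<Rightarrow> ('p, 's) gbij set" where
  "player_stabilizer N G = {g \<in> G. \<forall>i\<in>N. fst g i = i}"

definition player_transitive :: "'p set \<Rightarrow> ('p, 's) gbij set \<Rightarrow> bool" where
  "player_transitive N G \<longleftrightarrow> (\<forall>i\<in>N. \<forall>j\<in>N. \<exists>g\<in>G. fst g i = j)"

definition player_n_transitive :: "'p set \<Rightarrow> ('p, 's) gbij set \<Rightarrow> bool" where
  "player_n_transitive N G \<longleftrightarrow> fst ` G = {\<pi>. \<pi> permutes N}"

definition strategy_trivial :: "'p set \<Rightarrow> ('p \<Rightarrow> 's set) \<Rightarrow> ('p, 's) gbij set \<Rightarrow> bool" where
  "strategy_trivial N A G \<longleftrightarrow>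
     (\<forall>i\<in>N. \<forall>g\<in>G. fst g i = i \<longrightarrow> (\<forall>x\<in>A i. snd g i x = x))"

definition n_transitively_standard_symmetric ::
  "'p set \<Rightarrow> ('p \<Rightarrow> 's set) \<Rightarrow> ('p \<Rightarrow> ('p \<Rightarrow> 's) \<Rightarrow> real) \<Rightarrow> bool" where
  "n_transitively_standard_symmetric N A u \<longleftrightarrow>
     player_n_transitive N (game_automorphisms N A u) \<and>
     (\<exists>H. subgroup H (Aut_group N A u) \<and> player_transitive N H \<and> strategy_trivial N A H)"

end

theory Submission
  imports Defs "HOL-Combinatorics.Cycles"
begin

text \<open>The automorphisms of a game form a group, and the player permutation is a homomorphism
from it to the symmetric group on the players. A subgroup \<open>G \<cong> S\<^sub>N\<close> meeting the kernel
trivially therefore maps injectively, and by counting onto all of \<open>S\<^sub>N\<close>; this is player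
\<open>n\<close>-transitivity. For an \<open>n\<close>-cycle \<open>c\<close> on \<open>N\<close>, the elements of \<open>G\<close> lying over powers of \<open>c\<close>
form a subgroup that is transitive on players. A power of \<open>c\<close> fixing one player is the
identity, so an element of that subgroup fixing a player lies in the trivial player stabilizer
of \<open>G\<close> and fixes all strategies.\<close>

section \<open>The automorphism group of a game\<close>

lemma game_bijectionsD:
  assumes "g \<in> game_bijections N A"
  shows "fst g permutes N" and "snd g \<in> extensional N"
    and "i \<in> N \<Longrightarrow> snd g i \<in> extensional (A i)"
    and "i \<in> N \<Longrightarrow> bij_betw (snd g i) (A i) (A (fst g i))"
  using assms by (auto simp: game_bijections_def)

lemma game_bijections_maps:
  assumes "g \<in> game_bijections N A" "i \<in> N"
  shows "fst g i \<in> N" and "x \<in> A i \<Longrightarrow> snd g i x \<in> A (fst g i)"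
  using permutes_in_image[OF game_bijectionsD(1)[OF assms(1)]]
    bij_betw_apply[OF game_bijectionsD(4)[OF assms]] assms(2) by auto

lemma fst_gb_comp [simp]: "fst (gb_comp N A h g) = fst h \<circ> fst g"
  by (simp add: gb_comp_def)

lemma fst_gb_id [simp]: "fst (gb_id N A) = id"
  by (simp add: gb_id_def)

lemma gb_comp_in_game_bijections:
  assumes h: "h \<in> game_bijections N A" and g: "g \<in> game_bijections N A"
  shows "gb_comp N A h g \<in> game_bijections N A"
proof -
  have "bij_betw (\<lambda>x\<in>A i. snd h (fst g i) (snd g i x)) (A i) (A (fst h (fst g i)))" if "i \<in> N" for i
  proof -
    have "bij_betw (snd h (fst g i) \<circ> snd g i) (A i) (A (fst h (fst g i)))"
      using game_bijectionsD(4)[OF h] game_bijectionsD(4)[OF g] game_bijections_maps(1)[OF g] that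
      by (intro bij_betw_trans) auto
    then show ?thesis by (rule bij_betw_cong[THEN iffD1, rotated]) auto
  qed
  then show ?thesis
    using game_bijectionsD[OF h] game_bijectionsD[OF g]
    by (auto simp: game_bijections_def gb_comp_def permutes_compose)
qed

lemma gb_id_in_game_bijections: "gb_id N A \<in> game_bijections N A"
  by (auto simp: game_bijections_def gb_id_def permutes_id bij_betw_def inj_on_def)

lemma gb_comp_assoc:
  assumes "g \<in> game_bijections N A"
  shows "gb_comp N A (gb_comp N A k h) g = gb_comp N A k (gb_comp N A h g)"
  using game_bijections_maps[OF assms]
  by (auto intro!: prod_eqI ext simp: gb_comp_def restrict_def)

lemma restrict_snd_game_bijection:
  assumes "g \<in> game_bijections N A"
  shows "(\<lambda>i\<in>N. \<lambda>x\<in>A i. snd g i x) = snd g"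
  using game_bijectionsD(2,3)[OF assms] by (auto intro!: ext simp: restrict_def extensional_def)

lemma gb_comp_id_left:
  assumes "g \<in> game_bijections N A"
  shows "gb_comp N A (gb_id N A) g = g"
proof -
  have "(\<lambda>i\<in>N. \<lambda>x\<in>A i. (\<lambda>i\<in>N. \<lambda>x\<in>A i. x) (fst g i) (snd g i x)) = (\<lambda>i\<in>N. \<lambda>x\<in>A i. snd g i x)"
    using game_bijections_maps[OF assms] by (intro restrict_ext) simp
  then show ?thesis
    using restrict_snd_game_bijection[OF assms] by (simp add: gb_comp_def gb_id_def)
qed

text \<open>\<open>inv_into UNIV\<close> is the ordinary inverse function; the short name \<open>inv\<close> denotes the
group inverse in HOL-Algebra.\<close>

definition gb_inv :: "'p set \<Rightarrow> ('p \<Rightarrow> 's set) \<Rightarrow> ('p, 's) gbij \<Rightarrow> ('p, 's) gbij" where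
  "gb_inv N A g = (let \<sigma> = inv_into UNIV (fst g) in
     (\<sigma>, \<lambda>j\<in>N. \<lambda>y\<in>A j. inv_into (A (\<sigma> j)) (snd g (\<sigma> j)) y))"

lemma gb_inv_in_game_bijections:
  assumes g: "g \<in> game_bijections N A"
  shows "gb_inv N A g \<in> game_bijections N A"
proof -
  let ?\<sigma> = "inv_into UNIV (fst g)"
  have \<sigma>: "?\<sigma> permutes N" and \<pi>\<sigma>: "\<And>j. fst g (?\<sigma> j) = j"
    using game_bijectionsD(1)[OF g] by (auto simp: permutes_inv permutes_inverses)
  have "bij_betw (\<lambda>y\<in>A j. inv_into (A (?\<sigma> j)) (snd g (?\<sigma> j)) y) (A j) (A (?\<sigma> j))" if "j \<in> N" for j
  proof -
    have "bij_betw (inv_into (A (?\<sigma> j)) (snd g (?\<sigma> j))) (A j) (A (?\<sigma> j))"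
      using bij_betw_inv_into[OF game_bijectionsD(4)[OF g]] \<pi>\<sigma> that permutes_in_image[OF \<sigma>]
      by metis
    then show ?thesis by (rule bij_betw_cong[THEN iffD1, rotated]) auto
  qed
  then show ?thesis using \<sigma> by (auto simp: game_bijections_def gb_inv_def Let_def)
qed

lemma fst_gb_inv [simp]: "fst (gb_inv N A g) = inv_into UNIV (fst g)"
  by (simp add: gb_inv_def Let_def)

lemma gb_comp_inv_left:
  assumes g: "g \<in> game_bijections N A"
  shows "gb_comp N A (gb_inv N A g) g = gb_id N A"
proof -
  have "snd (gb_inv N A g) (fst g i) (snd g i x) = x" if "i \<in> N" "x \<in> A i" for i x
    using game_bijections_maps[OF g that(1)] that
      bij_betw_imp_inj_on[OF game_bijectionsD(4)[OF g that(1)]]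
      permutes_inverses(2)[OF game_bijectionsD(1)[OF g]]
    by (simp add: gb_inv_def Let_def)
  then show ?thesis
    using permutes_inv_o(2)[OF game_bijectionsD(1)[OF g]]
    by (simp add: gb_comp_def gb_id_def cong: restrict_cong)
qed

lemma gb_comp_inv_right:
  assumes g: "g \<in> game_bijections N A"
  shows "gb_comp N A g (gb_inv N A g) = gb_id N A"
proof -
  let ?\<sigma> = "inv_into UNIV (fst g)"
  have "snd g (?\<sigma> j) (snd (gb_inv N A g) j y) = y" if "j \<in> N" "y \<in> A j" for j y
  proof -
    have "?\<sigma> j \<in> N" and "fst g (?\<sigma> j) = j"
      using game_bijectionsD(1)[OF g] that(1) by (auto simp: permutes_inv permutes_in_image permutes_inverses)
    then show ?thesis
      using that f_inv_into_f[of y "snd g (?\<sigma> j)" "A (?\<sigma> j)"]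
        bij_betw_imp_surj_on[OF game_bijectionsD(4)[OF g]]
      by (simp add: gb_inv_def Let_def)
  qed
  then show ?thesis
    using permutes_inv_o(1)[OF game_bijectionsD(1)[OF g]]
    by (simp add: gb_comp_def gb_id_def cong: restrict_cong)
qed

lemma gb_profile_apply:
  assumes "g \<in> game_bijections N A" "i \<in> N"
  shows "gb_profile N g s (fst g i) = snd g i (s i)"
  using game_bijectionsD(1)[OF assms(1)] assms(2)
  by (simp add: gb_profile_def permutes_in_image permutes_inj_on inv_into_f_f)

lemma game_bijection_player_surj:
  assumes "g \<in> game_bijections N A" "j \<in> N"
  obtains i where "i \<in> N" "j = fst g i"
  using permutes_inv[OF game_bijectionsD(1)[OF assms(1)]] permutes_inverses(1)[OF game_bijectionsD(1)[OF assms(1)]]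
    assms(2) by (metis permutes_in_image)

lemma gb_profile_in_PiE:
  assumes g: "g \<in> game_bijections N A" and s: "s \<in> PiE N A"
  shows "gb_profile N g s \<in> PiE N A"
proof -
  have "gb_profile N g s j \<in> A j" if j: "j \<in> N" for j
  proof -
    obtain i where i: "i \<in> N" "j = fst g i"
      using g j by (rule game_bijection_player_surj)
    then show ?thesis
      using gb_profile_apply[OF g i(1)] game_bijections_maps(2)[OF g i(1)] s by auto
  qed
  then show ?thesis by (auto simp: gb_profile_def)
qed

lemma gb_profile_gb_comp:
  assumes h: "h \<in> game_bijections N A" and g: "g \<in> game_bijections N A" and s: "s \<in> PiE N A"
  shows "gb_profile N (gb_comp N A h g) s = gb_profile N h (gb_profile N g s)"
proof -
  have "gb_profile N (gb_comp N A h g) s k = gb_profile N h (gb_profile N g s) k" if k: "k \<in> N" for k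
  proof -
    obtain i where i: "i \<in> N" "k = fst (gb_comp N A h g) i"
      using gb_comp_in_game_bijections[OF h g] k by (rule game_bijection_player_surj)
    have "gb_profile N (gb_comp N A h g) s k = snd h (fst g i) (snd g i (s i))"
      using gb_profile_apply[OF gb_comp_in_game_bijections[OF h g] i(1)] i s
      by (auto simp: gb_comp_def)
    also have "\<dots> = gb_profile N h (gb_profile N g s) k"
      using gb_profile_apply[OF h] gb_profile_apply[OF g i(1)] game_bijections_maps(1)[OF g i(1)] i by simp
    finally show ?thesis .
  qed
  then show ?thesis by (auto simp: gb_profile_def)
qed

lemma gb_profile_gb_id:
  assumes "s \<in> PiE N A"
  shows "gb_profile N (gb_id N A) s = s"
proof -
  have "inv_into N id j = j" if "j \<in> N" for j
    using that by (simp add: inv_into_f_eq)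
  then show ?thesis
    using assms by (auto simp: gb_profile_def gb_id_def PiE_iff extensional_def)
qed

lemma game_automorphism_is_bijection: "g \<in> game_automorphisms N A u \<Longrightarrow> g \<in> game_bijections N A"
  by (simp add: game_automorphisms_def)

lemma game_automorphismsD:
  assumes "g \<in> game_automorphisms N A u" "i \<in> N" "s \<in> PiE N A"
  shows "u (fst g i) (gb_profile N g s) = u i s"
  using assms by (simp add: game_automorphisms_def)

lemma gb_comp_in_game_automorphisms:
  assumes h: "h \<in> game_automorphisms N A u" and g: "g \<in> game_automorphisms N A u"
  shows "gb_comp N A h g \<in> game_automorphisms N A u"
proof -
  have hB: "h \<in> game_bijections N A" and gB: "g \<in> game_bijections N A"
    using h g by (simp_all add: game_automorphism_is_bijection)
  have "u (fst (gb_comp N A h g) i) (gb_profile N (gb_comp N A h g) s) = u i s"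
    if i: "i \<in> N" and s: "s \<in> PiE N A" for i s
  proof -
    have "u (fst (gb_comp N A h g) i) (gb_profile N (gb_comp N A h g) s)
        = u (fst h (fst g i)) (gb_profile N h (gb_profile N g s))"
      by (simp add: gb_profile_gb_comp[OF hB gB s])
    also have "\<dots> = u (fst g i) (gb_profile N g s)"
      using game_automorphismsD[OF h game_bijections_maps(1)[OF gB i] gb_profile_in_PiE[OF gB s]] .
    also have "\<dots> = u i s"
      using game_automorphismsD[OF g i s] .
    finally show ?thesis .
  qed
  then show ?thesis
    using gb_comp_in_game_bijections[OF hB gB] by (simp add: game_automorphisms_def)
qed

lemma gb_id_in_game_automorphisms: "gb_id N A \<in> game_automorphisms N A u"
  by (simp add: game_automorphisms_def gb_id_in_game_bijections gb_profile_gb_id)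

lemma gb_inv_in_game_automorphisms:
  assumes g: "g \<in> game_automorphisms N A u"
  shows "gb_inv N A g \<in> game_automorphisms N A u"
proof -
  have gB: "g \<in> game_bijections N A" using g by (rule game_automorphism_is_bijection)
  let ?g' = "gb_inv N A g"
  have g'B: "?g' \<in> game_bijections N A" by (rule gb_inv_in_game_bijections[OF gB])
  have "u (fst ?g' i) (gb_profile N ?g' s) = u i s" if i: "i \<in> N" and s: "s \<in> PiE N A" for i s
  proof -
    have "u (fst ?g' i) (gb_profile N ?g' s)
        = u (fst g (fst ?g' i)) (gb_profile N g (gb_profile N ?g' s))"
      using game_automorphismsD[OF g game_bijections_maps(1)[OF g'B i] gb_profile_in_PiE[OF g'B s]] ..
    also have "\<dots> = u (fst (gb_comp N A g ?g') i) (gb_profile N (gb_comp N A g ?g') s)"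
      by (simp add: gb_profile_gb_comp[OF gB g'B s])
    also have "\<dots> = u i s"
      by (simp add: gb_comp_inv_right[OF gB] gb_profile_gb_id[OF s])
    finally show ?thesis .
  qed
  then show ?thesis using g'B by (simp add: game_automorphisms_def)
qed

lemma Aut_group_simps [simp]:
  "carrier (Aut_group N A u) = game_automorphisms N A u"
  "x \<otimes>\<^bsub>Aut_group N A u\<^esub> y = gb_comp N A x y"
  "\<one>\<^bsub>Aut_group N A u\<^esub> = gb_id N A"
  by (simp_all add: Aut_group_def)

lemma group_Aut_group: "group (Aut_group N A u)"
proof (rule groupI)
  fix g assume "g \<in> carrier (Aut_group N A u)"
  then show "\<exists>h\<in>carrier (Aut_group N A u). h \<otimes>\<^bsub>Aut_group N A u\<^esub> g = \<one>\<^bsub>Aut_group N A u\<^esub>"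
    using gb_inv_in_game_automorphisms gb_comp_inv_left[OF game_automorphism_is_bijection]
    by (intro bexI[of _ "gb_inv N A g"]) simp_all
qed (simp_all add: gb_comp_in_game_automorphisms gb_id_in_game_automorphisms
    gb_comp_assoc gb_comp_id_left game_automorphism_is_bijection)

lemma Aut_group_inv [simp]:
  assumes g: "g \<in> game_automorphisms N A u"
  shows "inv\<^bsub>Aut_group N A u\<^esub> g = gb_inv N A g"
proof (rule group.inv_equality[OF group_Aut_group])
  show "gb_inv N A g \<otimes>\<^bsub>Aut_group N A u\<^esub> g = \<one>\<^bsub>Aut_group N A u\<^esub>"
    using gb_comp_inv_left[OF game_automorphism_is_bijection[OF g]] by simp
qed (simp_all add: g gb_inv_in_game_automorphisms)

lemma inj_on_fst_if_player_stabilizer_trivial: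
  assumes G: "subgroup G (Aut_group N A u)" and stab: "player_stabilizer N G = {gb_id N A}"
  shows "inj_on fst G"
proof (rule inj_onI)
  interpret M: group "Aut_group N A u" by (rule group_Aut_group)
  fix g h assume g: "g \<in> G" and h: "h \<in> G" and eq: "fst g = fst h"
  have aut: "g \<in> game_automorphisms N A u" "h \<in> game_automorphisms N A u"
    using g h subgroup.subset[OF G] by auto
  let ?k = "inv\<^bsub>Aut_group N A u\<^esub> h \<otimes>\<^bsub>Aut_group N A u\<^esub> g"
  have "fst ?k = id"
    using aut eq permutes_inv_o(2)[OF game_bijectionsD(1)[OF game_automorphism_is_bijection[OF aut(2)]]]
    by simp
  moreover have "?k \<in> G"
    using subgroup.m_closed[OF G subgroup.m_inv_closed[OF G h] g] .
  ultimately have "?k = \<one>\<^bsub>Aut_group N A u\<^esub>"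
    using stab by (auto simp: player_stabilizer_def)
  then show "g = h"
    using aut by (metis M.inv_equality M.inv_inv M.inv_closed Aut_group_simps(1))
qed

lemma card_Bij_eq_card_permutations: "card (Bij N) = card {p. p permutes N}"
proof -
  have "bij_betw (\<lambda>p. restrict p N) {p. p permutes N} (Bij N)"
  proof (rule bij_betwI')
    fix p q assume "p \<in> {p. p permutes N}" "q \<in> {p. p permutes N}"
    then show "(restrict p N = restrict q N) = (p = q)"
      by (auto simp: restrict_def fun_eq_iff permutes_def) metis+
  next
    fix p assume "p \<in> {p. p permutes N}"
    then show "restrict p N \<in> Bij N"
      by (simp add: Bij_def bij_betw_cong[THEN iffD1, OF _ permutes_imp_bij])
  next
    fix f assume f: "f \<in> Bij N"
    define p where "p = (\<lambda>x. if x \<in> N then f x else x)"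
    have "p permutes N"
      using f by (auto simp: Bij_def p_def intro!: bij_imp_permutes bij_betw_cong[THEN iffD1, of N f])
    moreover have "f = restrict p N"
      using f by (auto simp: Bij_def p_def restrict_def extensional_def)
    ultimately show "\<exists>p\<in>{p. p permutes N}. f = restrict p N" by blast
  qed
  then show ?thesis by (simp add: bij_betw_same_card)
qed

lemma player_permutations_eq_if_card_eq:
  assumes N: "finite N" and G: "subgroup G (Aut_group N A u)"
    and stab: "player_stabilizer N G = {gb_id N A}" and card: "card G = card {\<pi>. \<pi> permutes N}"
  shows "fst ` G = {\<pi>. \<pi> permutes N}"
proof (rule card_subset_eq)
  show "finite {\<pi>. \<pi> permutes N}" using N by (rule finite_permutations)
  show "fst ` G \<subseteq> {\<pi>. \<pi> permutes N}"
    using subgroup.subset[OF G] by (auto dest: game_automorphism_is_bijection game_bijectionsD(1))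
  show "card (fst ` G) = card {\<pi>. \<pi> permutes N}"
    using card_image[OF inj_on_fst_if_player_stabilizer_trivial[OF G stab]] card by simp
qed

section \<open>Regular cyclic permutations\<close>

definition regular_cyclic_permutation :: "'a set \<Rightarrow> ('a \<Rightarrow> 'a) \<Rightarrow> bool" where
  "regular_cyclic_permutation N c \<longleftrightarrow> c permutes N \<and>
     (\<forall>i\<in>N. \<forall>j\<in>N. \<exists>k. (c ^^ k) i = j) \<and> (\<forall>k. \<forall>i\<in>N. (c ^^ k) i = i \<longrightarrow> c ^^ k = id)"

lemma funpow_cycle_of_list_nth:
  assumes "distinct cs" "a < length cs"
  shows "(cycle_of_list cs ^^ k) (cs ! a) = cs ! ((k + a) mod length cs)"
proof -
  have "(cycle_of_list cs ^^ k) (cs ! a) = map (cycle_of_list cs ^^ k) cs ! a"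
    using assms(2) by (rule nth_map[symmetric])
  also have "\<dots> = rotate k cs ! a"
    by (simp only: cyclic_rotation[OF assms(1)])
  also have "\<dots> = cs ! ((k + a) mod length cs)"
    using assms(2) by (rule nth_rotate)
  finally show ?thesis .
qed

lemma regular_cyclic_permutation_cycle_of_list:
  assumes cs: "distinct cs"
  shows "regular_cyclic_permutation (set cs) (cycle_of_list cs)"
proof -
  let ?c = "cycle_of_list cs" and ?n = "length cs"
  have "\<exists>k. (?c ^^ k) i = j" if ij: "i \<in> set cs" "j \<in> set cs" for i j
  proof -
    obtain a b where ab: "a < ?n" "i = cs ! a" "b < ?n" "j = cs ! b"
      using ij by (auto simp: in_set_conv_nth)
    have "(b + ?n - a + a) mod ?n = b" using ab by simp
    then show ?thesis using funpow_cycle_of_list_nth[OF cs ab(1), of "b + ?n - a"] ab by metis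
  qed
  moreover have "?c ^^ k = id" if i: "i \<in> set cs" "(?c ^^ k) i = i" for i k
  proof -
    obtain a where a: "a < ?n" "i = cs ! a" using i(1) by (auto simp: in_set_conv_nth)
    have "(k + a) mod ?n < ?n" using a(1) by (intro mod_less_divisor) linarith
    then have "(k + a) mod ?n = a"
      using i(2) funpow_cycle_of_list_nth[OF cs a(1)] a nth_eq_iff_index_eq[OF cs] by simp
    then have "?n * ((k + a) div ?n) + a = k + a"
      using mult_div_mod_eq[of ?n "k + a"] by simp
    then have k: "?n dvd k" by (metis add_right_cancel dvd_triv_left)
    have "(?c ^^ k) x = x" for x
    proof (cases "x \<in> set cs")
      case True
      then obtain b where b: "b < ?n" "x = cs ! b" by (auto simp: in_set_conv_nth)
      have "(k + b) mod ?n = b" using k b(1) by (simp add: mod_add_left_eq[symmetric])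
      then show ?thesis using funpow_cycle_of_list_nth[OF cs b(1)] b(2) by simp
    next
      case False
      then show ?thesis by (rule permutes_not_in[OF permutes_funpow[OF cycle_permutes]])
    qed
    then show ?thesis by auto
  qed
  ultimately show ?thesis
    by (simp add: regular_cyclic_permutation_def cycle_permutes)
qed

lemma exists_regular_cyclic_permutation:
  assumes "finite N"
  obtains c where "regular_cyclic_permutation N c"
  using finite_distinct_list[OF assms] regular_cyclic_permutation_cycle_of_list by metis

lemma inv_funpow_nilpotent:
  assumes "c ^^ n = id" "0 < n"
  shows "inv_into UNIV (c ^^ k) = c ^^ ((n - 1) * k)"
proof (rule inv_unique_comp)
  have "k + (n - 1) * k = n * k" using assms(2) by (cases n) auto
  moreover have "c ^^ (n * k) = id" by (simp add: funpow_mult[symmetric] assms(1))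
  ultimately have "c ^^ (k + (n - 1) * k) = id" and "c ^^ ((n - 1) * k + k) = id"
    by (simp_all add: add.commute)
  then show "c ^^ k \<circ> c ^^ ((n - 1) * k) = id" "c ^^ ((n - 1) * k) \<circ> c ^^ k = id"
    by (simp_all add: funpow_add[symmetric])
qed

section \<open>Subgroups lying over a cyclic group of players\<close>

definition lifts_of_powers :: "('p, 's) gbij set \<Rightarrow> ('p \<Rightarrow> 'p) \<Rightarrow> ('p, 's) gbij set" where
  "lifts_of_powers G c = {g \<in> G. \<exists>k. fst g = c ^^ k}"

lemma subgroup_lifts_of_powers:
  assumes G: "subgroup G (Aut_group N A u)" and c: "permutation c"
  shows "subgroup (lifts_of_powers G c) (Aut_group N A u)"
  unfolding lifts_of_powers_def
proof (rule group.subgroupI[OF group_Aut_group])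
  interpret G: subgroup G "Aut_group N A u" by (rule G)
  obtain n where n: "c ^^ n = id" "0 < n" using permutation_is_nilpotent[OF c] .
  show "{g \<in> G. \<exists>k. fst g = c ^^ k} \<subseteq> carrier (Aut_group N A u)" using G.subset by blast
  have "gb_id N A \<in> G" and "fst (gb_id N A) = c ^^ 0" using G.one_closed by simp_all
  then show "{g \<in> G. \<exists>k. fst g = c ^^ k} \<noteq> {}" by blast
  fix g h assume "g \<in> {g \<in> G. \<exists>k. fst g = c ^^ k}" "h \<in> {g \<in> G. \<exists>k. fst g = c ^^ k}"
  then obtain a b where ab: "g \<in> G" "fst g = c ^^ a" "h \<in> G" "fst h = c ^^ b" by blast
  have "g \<in> game_automorphisms N A u" using G.subset ab(1) by auto
  then show "inv\<^bsub>Aut_group N A u\<^esub> g \<in> {g \<in> G. \<exists>k. fst g = c ^^ k}"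
    using G.m_inv_closed[OF ab(1)] ab(2) inv_funpow_nilpotent[OF n] by auto
  show "g \<otimes>\<^bsub>Aut_group N A u\<^esub> h \<in> {g \<in> G. \<exists>k. fst g = c ^^ k}"
    using G.m_closed[OF ab(1,3)] ab(2,4) by (auto simp: funpow_add[symmetric])
qed

lemma player_transitive_lifts_of_powers:
  assumes img: "fst ` G = {\<pi>. \<pi> permutes N}" and c: "regular_cyclic_permutation N c"
  shows "player_transitive N (lifts_of_powers G c)"
  unfolding player_transitive_def lifts_of_powers_def
proof (intro ballI)
  fix i j assume "i \<in> N" "j \<in> N"
  then obtain k where k: "(c ^^ k) i = j" using c unfolding regular_cyclic_permutation_def by blast
  have "c ^^ k \<in> fst ` G"
    using img c by (simp add: regular_cyclic_permutation_def permutes_funpow)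
  then obtain g where "g \<in> G" "fst g = c ^^ k" by auto
  then have "g \<in> {g \<in> G. \<exists>k. fst g = c ^^ k}" and "fst g i = j" using k by auto
  then show "\<exists>g\<in>{g \<in> G. \<exists>k. fst g = c ^^ k}. fst g i = j" by blast
qed

lemma strategy_trivial_lifts_of_powers:
  assumes stab: "player_stabilizer N G = {gb_id N A}" and c: "regular_cyclic_permutation N c"
  shows "strategy_trivial N A (lifts_of_powers G c)"
  unfolding strategy_trivial_def lifts_of_powers_def
proof (intro ballI impI)
  fix i g x assume i: "i \<in> N" and "g \<in> {g \<in> G. \<exists>k. fst g = c ^^ k}" and fix_i: "fst g i = i"
    and x: "x \<in> A i"
  then obtain k where "g \<in> G" "fst g = c ^^ k" by blast
  moreover have "c ^^ k = id"
    using c i fix_i \<open>fst g = c ^^ k\<close> by (auto simp: regular_cyclic_permutation_def)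
  ultimately have "g \<in> player_stabilizer N G" by (simp add: player_stabilizer_def)
  then show "snd g i x = x" using stab i x by (simp add: gb_id_def)
qed

theorem proposition5p6:
  fixes N :: "'p set" and A :: "'p \<Rightarrow> 's set" and u :: "'p \<Rightarrow> ('p \<Rightarrow> 's) \<Rightarrow> real"
    and G :: "('p, 's) gbij set"
  assumes "finite_game N A u"
    and "subgroup G (Aut_group N A u)"
    and "(Aut_group N A u)\<lparr>carrier := G\<rparr> \<cong> BijGroup N"
    and "player_stabilizer N G = {gb_id N A}"
  shows "n_transitively_standard_symmetric N A u"
proof -
  have N: "finite N" using assms(1) by (simp add: finite_game_def)
  have "card G = card {\<pi>. \<pi> permutes N}"
    using iso_same_card[OF assms(3)] by (simp add: BijGroup_def card_Bij_eq_card_permutations)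
  then have img: "fst ` G = {\<pi>. \<pi> permutes N}"
    using player_permutations_eq_if_card_eq[OF N assms(2,4)] by blast
  have "fst ` G \<subseteq> fst ` game_automorphisms N A u"
    using subgroup.subset[OF assms(2)] by auto
  moreover have "fst ` game_automorphisms N A u \<subseteq> {\<pi>. \<pi> permutes N}"
    by (auto dest: game_automorphism_is_bijection game_bijectionsD(1))
  ultimately have "player_n_transitive N (game_automorphisms N A u)"
    by (simp add: player_n_transitive_def img)
  moreover obtain c where c: "regular_cyclic_permutation N c"
    using exists_regular_cyclic_permutation[OF N] .
  moreover have "permutation c"
    using c N by (auto simp: regular_cyclic_permutation_def permutation_permutes)
  ultimately show ?thesis
    unfolding n_transitively_standard_symmetric_def
    using subgroup_lifts_of_powers[OF assms(2)] player_transitive_lifts_of_powers[OF img]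
      strategy_trivial_lifts_of_powers[OF assms(4)] by blast
qed

end
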